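(* Consider the problem $\min_{x\in X}\{\psi(x):=f(x)+h(x)\}$ with the setting, inexact oracle, prox setup and Algorithm AGM described in the context. Assume $f$ is equipped with an inexact first-order oracle with uncontrolled error $\delta_u$ and function $L(\cdot)$, and that for any constants $c_1,c_2>0$ there exists an integer $i\ge 0$ such that $2^i c_1\ge L\!\left(\frac{c_2}{c_1 2^i}\right)$. Assume also there exists $\psi^*>-\infty$ with $\psi(x)\ge\psi^*$ for all $x\in X$. Then, after $N$ iterations of Algorithm AGM (i.e. for iterates $x_0,\dots,x_N$ and accepted constants $M_0,\dots,M_{N-1}$), with $K\in\{0,\dots,N-1\}$ an index minimizing $\|M_k(x_k-x_{k+1})\|_{\mathcal{E}}$ over $k\in\{0,\dots,N-1\}$, it holds that $$\|M_K(x_K-x_{K+1})\|_{\mathcal{E}}^2\le\Big(\sum_{k=0}^{N-1}\frac{1}{2M_k}\Big)^{-1}\big(\psi(x_0)-\psi^*+N(4\delta_u+\delta_{pu})\big)+\frac{\varepsilon}{2}.$$ Moreover, the total number of checks of the acceptance inequality (over these $N$ iterations) is not more than $2N-1+\log_2\frac{M_{N-1}}{L_0}$.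
   Context: Setting: $\mathcal{E}$ is a finite-dimensional real vector space with norm $\|\cdot\|_{\mathcal{E}}$, dual $\mathcal{E}^*$ with dual norm $\|\cdot\|_{\mathcal{E},*}$; $\langle g,x\rangle$ is the value of $g\in\mathcal{E}^*$ at $x$. $X\subseteq\mathcal{E}$ is closed convex, $h$ is convex on $X$, $f:X\to\mathbb{R}$. Inexact oracle: $f$ is equipped with an inexact first-order oracle on $X$ if there exist $\delta_u>0$ and a function $L:(0,\infty)\to(0,\infty)$ such that at any $x\in X$, for any $\delta_c>0$, one can compute $\tilde f(x,\delta_c,\delta_u)\in\mathbb{R}$ and $\tilde g(x,\delta_c,\delta_u)\in\mathcal{E}^*$ with $|f(x)-\tilde f(x,\delta_c,\delta_u)|\le\delta_c+\delta_u$ and $f(y)-\big(\tilde f(x,\delta_c,\delta_u)+\langle\tilde g(x,\delta_c,\delta_u),y-x\rangle\big)\le\frac{L(\delta_c)}{2}\|x-y\|_{\mathcal{E}}^2+\delta_c+\delta_u$ for all $y\in X$. Prox setup: $d$ is continuous and convex on $X$, admits a selection of subgradients $d'(x)$ continuous on $X^0$ (the set of $x\in X$ where $d'(x)$ exists), and is $1$-strongly convex: $d(y)-d(x)-\langle d'(x),y-x\rangle\ge\frac12\|y-x\|_{\mathcal{E}}^2$ for $x\in X^0,y\in X$. Bregman divergence: $V[z](x)=d(x)-d(z)-\langle d'(z),x-z\rangle$. Inexact composite prox-mapping: given $\delta_{pu}>0$, $\gamma>0$, $\bar x\in X^0$, $g\in\mathcal{E}^*$, $\delta_{pc}>0$,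 a point $\tilde x\in X^0$ such that there is $p\in\partial h(\tilde x)$ with $\langle g+\frac1\gamma[d'(\tilde x)-d'(\bar x)]+p,u-\tilde x\rangle\ge-\delta_{pc}-\delta_{pu}$ for all $u\in X$ (an approximate minimizer of $\langle g,x\rangle+\frac1\gamma V[\bar x](x)+h(x)$ over $X$). Algorithm AGM: input $\varepsilon>0$, $\delta_u>0$ (oracle uncontrolled error), $\delta_{pu}>0$, $x_0\in X^0$, $L_0>0$. For $k=0,1,\dots$: set $M_k:=L_k/2$; repeat { $M_k:=2M_k$; $\delta_{c,k}=\delta_{pc,k}=\frac{\varepsilon}{20M_k}$; compute $\tilde f_k=\tilde f(x_k,\delta_{c,k},\delta_u)$, $\tilde g_k=\tilde g(x_k,\delta_{c,k},\delta_u)$; compute $w_k$ an inexact composite prox-mapping with $\bar x=x_k$, $g=\tilde g_k$, $\gamma=1/M_k$, errors $\delta_{pc,k},\delta_{pu}$; compute $\tilde f(w_k,\delta_{c,k},\delta_u)$ } until (acceptance inequality) $\tilde f(w_k,\delta_{c,k},\delta_u)\le\tilde f_k+\langle\tilde g_k,w_k-x_k\rangle+\frac{M_k}{2}\|w_k-x_k\|_{\mathcal{E}}^2+\frac{\varepsilon}{10M_k}+2\delta_u$; then set $x_{k+1}=w_k$, $L_{k+1}=M_k/2$. Here $M_k$ denotes its value at acceptance. *)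

theory Defs
  imports "HOL-Analysis.Analysis"
begin

text \<open>The space E is modelled by a type 'a of class euclidean_space (finite-dimensional real
vector space). The norm of E is an arbitrary norm nE (not necessarily the Euclidean one).
The dual space E* is identified with E via the inner product, so the pairing is g \<bullet> x.\<close>

definition is_norm :: "('a::real_normed_vector \<Rightarrow> real) \<Rightarrow> bool" where
  "is_norm nE \<longleftrightarrow> (\<forall>x. nE x \<ge> 0) \<and> (\<forall>x. nE x = 0 \<longleftrightarrow> x = 0)
     \<and> (\<forall>c x. nE (c *\<^sub>R x) = \<bar>c\<bar> * nE x) \<and> (\<forall>x y. nE (x + y) \<le> nE x + nE y)"

text \<open>Inexact first-order orc with uncontrolled error du and function L.
 ft x dc and gt x dc are the oracle outputs at x with controlled error dc (du fixed).\<close>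
definition inexact_oracle ::
  "('a::euclidean_space \<Rightarrow> real) \<Rightarrow> 'a set \<Rightarrow> ('a \<Rightarrow> real) \<Rightarrow> real \<Rightarrow> (real \<Rightarrow> real)
   \<Rightarrow> ('a \<Rightarrow> real \<Rightarrow> real) \<Rightarrow> ('a \<Rightarrow> real \<Rightarrow> 'a) \<Rightarrow> bool" where
  "inexact_oracle nE X f du L ft gt \<longleftrightarrow> du > 0 \<and> (\<forall>dc>0. L dc > 0) \<and>
     (\<forall>x\<in>X. \<forall>dc>0. \<bar>f x - ft x dc\<bar> \<le> dc + du \<and>
        (\<forall>y\<in>X. f y - (ft x dc + gt x dc \<bullet> (y - x)) \<le> L dc / 2 * (nE (x - y))\<^sup>2 + dc + du))"

definition subdiff_on :: "('a::euclidean_space \<Rightarrow> real) \<Rightarrow> 'a set \<Rightarrow> 'a \<Rightarrow> 'a set" where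
  "subdiff_on h X w = {p. \<forall>u\<in>X. h u \<ge> h w + p \<bullet> (u - w)}"

definition X0_of :: "('a::euclidean_space \<Rightarrow> real) \<Rightarrow> 'a set \<Rightarrow> 'a set" where
  "X0_of d X = {x\<in>X. subdiff_on d X x \<noteq> {}}"

definition prox_setup ::
  "('a::euclidean_space \<Rightarrow> real) \<Rightarrow> 'a set \<Rightarrow> ('a \<Rightarrow> real) \<Rightarrow> ('a \<Rightarrow> 'a) \<Rightarrow> bool" where
  "prox_setup nE X d d' \<longleftrightarrow> continuous_on X d \<and> convex_on X d \<and>
     (\<forall>x\<in>X0_of d X. d' x \<in> subdiff_on d X x) \<and> continuous_on (X0_of d X) d' \<and>
     (\<forall>x\<in>X0_of d X. \<forall>y\<in>X. d y - d x - d' x \<bullet> (y - x) \<ge> 1/2 * (nE (y - x))\<^sup>2)"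

definition inexact_prox ::
  "'a set \<Rightarrow> ('a::euclidean_space \<Rightarrow> real) \<Rightarrow> ('a \<Rightarrow> 'a) \<Rightarrow> ('a \<Rightarrow> real)
   \<Rightarrow> real \<Rightarrow> 'a \<Rightarrow> 'a \<Rightarrow> real \<Rightarrow> real \<Rightarrow> 'a \<Rightarrow> bool" where
  "inexact_prox X d d' h gamma xbar g dpc dpu xt \<longleftrightarrow> xt \<in> X0_of d X \<and>
     (\<exists>p\<in>subdiff_on h X xt. \<forall>u\<in>X.
        (g + (1/gamma) *\<^sub>R (d' xt - d' xbar) + p) \<bullet> (u - xt) \<ge> - dpc - dpu)"

text \<open>A run of N iterations of Algorithm AGM.
  x k: iterates; Lk k: the constants L_k; it k: index of the accepted trial in iteration k
  (trial i uses M = L_k * 2^i, so it k + 1 acceptance checks are performed in iteration k);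
  w k i: point computed at trial i of iteration k.\<close>
definition agm_M :: "(nat \<Rightarrow> real) \<Rightarrow> nat \<Rightarrow> nat \<Rightarrow> real" where
  "agm_M Lk k i = Lk k * 2 ^ i"

definition agm_accept ::
  "('a::euclidean_space \<Rightarrow> real) \<Rightarrow> ('a \<Rightarrow> real \<Rightarrow> real) \<Rightarrow> ('a \<Rightarrow> real \<Rightarrow> 'a)
   \<Rightarrow> real \<Rightarrow> real \<Rightarrow> real \<Rightarrow> 'a \<Rightarrow> 'a \<Rightarrow> bool" where
  "agm_accept nE ft gt eps du M xk w \<longleftrightarrow>
     ft w (eps / (20 * M)) \<le> ft xk (eps / (20 * M)) + gt xk (eps / (20 * M)) \<bullet> (w - xk)
        + M / 2 * (nE (w - xk))\<^sup>2 + eps / (10 * M) + 2 * du"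

definition agm_run ::
  "('a::euclidean_space \<Rightarrow> real) \<Rightarrow> 'a set \<Rightarrow> ('a \<Rightarrow> real) \<Rightarrow> ('a \<Rightarrow> 'a) \<Rightarrow> ('a \<Rightarrow> real)
   \<Rightarrow> ('a \<Rightarrow> real \<Rightarrow> real) \<Rightarrow> ('a \<Rightarrow> real \<Rightarrow> 'a)
   \<Rightarrow> real \<Rightarrow> real \<Rightarrow> real \<Rightarrow> 'a \<Rightarrow> real
   \<Rightarrow> nat \<Rightarrow> (nat \<Rightarrow> 'a) \<Rightarrow> (nat \<Rightarrow> real) \<Rightarrow> (nat \<Rightarrow> nat) \<Rightarrow> (nat \<Rightarrow> nat \<Rightarrow> 'a) \<Rightarrow> bool" where
  "agm_run nE X d d' h ft gt eps du dpu x0 L0 N x Lk it w \<longleftrightarrow>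
     x 0 = x0 \<and> Lk 0 = L0 \<and>
     (\<forall>k<N.
        (\<forall>i\<le>it k. inexact_prox X d d' h (1 / agm_M Lk k i) (x k) (gt (x k) (eps / (20 * agm_M Lk k i)))
                     (eps / (20 * agm_M Lk k i)) dpu (w k i)) \<and>
        (\<forall>i<it k. \<not> agm_accept nE ft gt eps du (agm_M Lk k i) (x k) (w k i)) \<and>
        agm_accept nE ft gt eps du (agm_M Lk k (it k)) (x k) (w k (it k)) \<and>
        x (Suc k) = w k (it k) \<and>
        Lk (Suc k) = agm_M Lk k (it k) / 2)"

end

theory Submission
  imports Defs
begin

text \<open>Each accepted step is a sufficient-decrease step: optimality of the inexact prox point
  tested at the previous iterate, combined with strong convexity of \<open>d\<close> in both directions,
  shows that the linear model plus \<open>h\<close> drops by \<open>M \<parallel>w - x\<parallel>\<^sup>2\<close>, while the acceptance test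
  loses only half of that. Telescoping over \<open>N\<close> steps and bounding every term from below by
  the minimal one gives the first estimate. For the count, \<open>L\<^sub>k\<close> is doubled at each rejected
  check and halved at each acceptance, so the total number of checks is read off from
  \<open>M\<^sub>N\<^sub>-\<^sub>1 / L\<^sub>0\<close>. The growth assumption on \<open>L\<close> only guarantees that every inner loop
  terminates; this is built into the notion of a run and not needed again.\<close>

lemma is_norm_minus_commute:
  assumes "is_norm nE"
  shows "nE (a - b) = nE (b - a)"
proof -
  have "nE ((-1::real) *\<^sub>R (a - b)) = \<bar>-1::real\<bar> * nE (a - b)"
    using assms unfolding is_norm_def by blast
  then show ?thesis by simp
qed

lemma inexact_prox_decrease:
  fixes nE :: "'a::euclidean_space \<Rightarrow> real"
  assumes prox: "prox_setup nE X d d'"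
    and norm: "is_norm nE"
    and gamma: "gamma > 0"
    and xbar: "xbar \<in> X0_of d X"
    and xt: "inexact_prox X d d' h gamma xbar g dpc dpu xt"
  shows "g \<bullet> (xt - xbar) + h xt \<le> h xbar - (nE (xt - xbar))\<^sup>2 / gamma + dpc + dpu"
proof -
  obtain p where xt0: "xt \<in> X0_of d X" and p: "p \<in> subdiff_on h X xt"
    and opt: "\<forall>u\<in>X. (g + (1/gamma) *\<^sub>R (d' xt - d' xbar) + p) \<bullet> (u - xt) \<ge> - dpc - dpu"
    using xt unfolding inexact_prox_def by blast
  have xbarX: "xbar \<in> X" and xtX: "xt \<in> X" using xbar xt0 unfolding X0_of_def by auto
  define q where "q = (nE (xt - xbar))\<^sup>2"
  have strong: "\<forall>x\<in>X0_of d X. \<forall>y\<in>X. d y - d x - d' x \<bullet> (y - x) \<ge> 1/2 * (nE (y - x))\<^sup>2"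
    using prox unfolding prox_setup_def by blast
  have "d xbar - d xt - d' xt \<bullet> (xbar - xt) \<ge> q / 2"
    using strong xt0 xbarX is_norm_minus_commute[OF norm, of xbar xt] unfolding q_def by fastforce
  moreover have "d xt - d xbar - d' xbar \<bullet> (xt - xbar) \<ge> q / 2"
    using strong xbar xtX unfolding q_def by auto
  ultimately have bregman: "(d' xbar - d' xt) \<bullet> (xbar - xt) \<ge> q"
    by (simp add: inner_diff_left inner_diff_right inner_commute)
  have "(g + (1/gamma) *\<^sub>R (d' xt - d' xbar) + p) \<bullet> (xbar - xt) \<ge> - dpc - dpu"
    using opt xbarX by blast
  then have "g \<bullet> (xbar - xt) + p \<bullet> (xbar - xt) - ((d' xbar - d' xt) \<bullet> (xbar - xt)) / gamma
      \<ge> - dpc - dpu"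
    by (simp add: inner_add_left inner_diff_left divide_inverse algebra_simps)
  moreover have "((d' xbar - d' xt) \<bullet> (xbar - xt)) / gamma \<ge> q / gamma"
    using bregman gamma by (simp add: divide_right_mono)
  moreover have "h xbar \<ge> h xt + p \<bullet> (xbar - xt)"
    using p xbarX unfolding subdiff_on_def by blast
  moreover have "g \<bullet> (xt - xbar) = - (g \<bullet> (xbar - xt))"
    by (simp add: inner_diff_right)
  ultimately show ?thesis unfolding q_def by linarith
qed

lemma accepted_step_decrease:
  fixes nE :: "'a::euclidean_space \<Rightarrow> real"
  assumes norm: "is_norm nE"
    and orc: "inexact_oracle nE X f du L ft gt"
    and prox: "prox_setup nE X d d'"
    and M: "M > 0" and eps: "eps > 0"
    and xk: "xk \<in> X0_of d X"
    and wk: "inexact_prox X d d' h (1/M) xk (gt xk (eps/(20*M))) (eps/(20*M)) dpu wk"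
    and acc: "agm_accept nE ft gt eps du M xk wk"
  shows "f wk + h wk \<le> f xk + h xk - (nE (M *\<^sub>R (xk - wk)))\<^sup>2 / (2*M) + eps/(4*M) + 4*du + dpu"
proof -
  define dc where "dc = eps/(20*M)"
  define q where "q = (nE (wk - xk))\<^sup>2"
  have dc: "dc > 0" using M eps by (simp add: dc_def)
  have xkX: "xk \<in> X" and wkX: "wk \<in> X"
    using xk wk unfolding X0_of_def inexact_prox_def by auto
  have decrease: "gt xk dc \<bullet> (wk - xk) + h wk \<le> h xk - M * q + dc + dpu"
    using inexact_prox_decrease[OF prox norm _ xk wk] M unfolding dc_def q_def by (simp add: mult.commute)
  have model: "ft wk dc \<le> ft xk dc + gt xk dc \<bullet> (wk - xk) + M / 2 * q + 2 * dc + 2 * du"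
    using acc M unfolding agm_accept_def dc_def q_def by simp
  have "\<bar>f wk - ft wk dc\<bar> \<le> dc + du" and "\<bar>f xk - ft xk dc\<bar> \<le> dc + du"
    using orc wkX xkX dc unfolding inexact_oracle_def by blast+
  moreover have "(nE (M *\<^sub>R (xk - wk)))\<^sup>2 / (2*M) = M * q / 2"
    using norm M is_norm_minus_commute[OF norm, of xk wk]
    unfolding is_norm_def q_def by (simp add: power2_eq_square)
  moreover have "eps/(4*M) = 5 * dc" using M by (simp add: dc_def)
  ultimately show ?thesis using decrease model by linarith
qed

lemma weighted_sum_ge_min:
  fixes r c :: "nat \<Rightarrow> real"
  assumes "\<forall>k<N. r K \<le> r k" "\<forall>k<N. c k \<ge> 0"
  shows "r K * (\<Sum>k<N. c k) \<le> (\<Sum>k<N. r k * c k)"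
  unfolding sum_distrib_left using assms by (intro sum_mono) (simp add: mult_right_mono)

context
  fixes nE :: "'a::euclidean_space \<Rightarrow> real"
    and X :: "'a set" and f h d :: "'a \<Rightarrow> real" and d' :: "'a \<Rightarrow> 'a"
    and L :: "real \<Rightarrow> real" and ft :: "'a \<Rightarrow> real \<Rightarrow> real" and gt :: "'a \<Rightarrow> real \<Rightarrow> 'a"
    and eps du dpu L0 :: real and x0 :: 'a
    and N :: nat and x :: "nat \<Rightarrow> 'a" and Lk :: "nat \<Rightarrow> real" and it :: "nat \<Rightarrow> nat"
    and w :: "nat \<Rightarrow> nat \<Rightarrow> 'a"
  assumes run: "agm_run nE X d d' h ft gt eps du dpu x0 L0 N x Lk it w"
begin

lemma agm_run_accepted:
  assumes "k < N"
  shows "inexact_prox X d d' h (1 / agm_M Lk k (it k)) (x k)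
           (gt (x k) (eps / (20 * agm_M Lk k (it k)))) (eps / (20 * agm_M Lk k (it k))) dpu (x (Suc k))"
    and "agm_accept nE ft gt eps du (agm_M Lk k (it k)) (x k) (x (Suc k))"
    and "Lk (Suc k) = Lk k * 2 ^ it k / 2"
  using run assms unfolding agm_run_def agm_M_def by auto

lemma agm_run_Lk_pos:
  assumes "L0 > 0" "k \<le> N"
  shows "Lk k > 0"
  using assms(2)
proof (induction k)
  case 0
  then show ?case using run assms(1) unfolding agm_run_def by simp
next
  case (Suc k)
  then have "Lk k * 2 ^ it k > 0" by simp
  then show ?case using agm_run_accepted(3)[of k] Suc.prems by simp
qed

lemma agm_run_M_pos:
  assumes "L0 > 0" "k < N"
  shows "agm_M Lk k (it k) > 0"
  using agm_run_Lk_pos[OF assms(1), of k] assms(2) unfolding agm_M_def by simp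

lemma agm_run_iterate_X0:
  assumes "x0 \<in> X0_of d X" "k \<le> N"
  shows "x k \<in> X0_of d X"
proof (cases k)
  case 0
  then show ?thesis using run assms(1) unfolding agm_run_def by simp
next
  case (Suc j)
  then show ?thesis using agm_run_accepted(1)[of j] assms(2) unfolding inexact_prox_def by simp
qed

lemma agm_run_telescope:
  assumes norm: "is_norm nE" and orc: "inexact_oracle nE X f du L ft gt"
    and prox: "prox_setup nE X d d'"
    and eps: "eps > 0" and L0: "L0 > 0" and x0: "x0 \<in> X0_of d X"
    and n: "n \<le> N"
  shows "f (x n) + h (x n) \<le> f x0 + h x0
      - (\<Sum>k<n. (nE (agm_M Lk k (it k) *\<^sub>R (x k - x (Suc k))))\<^sup>2 / (2 * agm_M Lk k (it k)))
      + (\<Sum>k<n. eps / (4 * agm_M Lk k (it k))) + real n * (4 * du + dpu)"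
  using n
proof (induction n)
  case 0
  then show ?case using run unfolding agm_run_def by simp
next
  case (Suc n)
  have "n < N" using Suc.prems by simp
  from accepted_step_decrease[OF norm orc prox agm_run_M_pos[OF L0 this] eps
      agm_run_iterate_X0[OF x0] agm_run_accepted(1,2)[OF \<open>n < N\<close>]]
  show ?case using Suc by (simp add: algebra_simps)
qed

lemma agm_run_Lk_doubling:
  assumes "n \<le> N"
  shows "Lk n * 2 ^ n = L0 * 2 ^ (\<Sum>j<n. it j)"
  using assms
proof (induction n)
  case 0
  then show ?case using run unfolding agm_run_def by simp
next
  case (Suc n)
  have "Lk (Suc n) * 2 ^ Suc n = (Lk n * 2 ^ n) * 2 ^ it n"
    using agm_run_accepted(3)[of n] Suc.prems by simp
  then show ?case using Suc by (simp add: power_add)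
qed

lemma agm_run_check_count:
  assumes L0: "L0 > 0" and N: "N \<ge> 1"
  shows "real (\<Sum>k<N. it k + 1) = 2 * real N - 1 + log 2 (agm_M Lk (N - 1) (it (N - 1)) / L0)"
proof -
  obtain m where m: "N = Suc m" using N by (cases N) auto
  have "agm_M Lk m (it m) * 2 ^ m = L0 * 2 ^ (\<Sum>j<N. it j)"
    using agm_run_Lk_doubling[of m] m unfolding agm_M_def by (simp add: power_add algebra_simps)
  then have "agm_M Lk m (it m) / L0 = 2 ^ (\<Sum>j<N. it j) / 2 ^ m"
    using L0 by (simp add: field_simps)
  also have "\<dots> = 2 powr (real (\<Sum>j<N. it j) - real m)"
    by (simp only: powr_diff powr_realpow[symmetric] zero_less_numeral)
  finally have "log 2 (agm_M Lk m (it m) / L0) = real (\<Sum>j<N. it j) - real m"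
    by simp
  then show ?thesis using m by (simp add: sum.distrib)
qed

end

theorem theorem1:
  fixes nE :: "'a::euclidean_space \<Rightarrow> real"
    and X :: "'a set" and f h d :: "'a \<Rightarrow> real" and d' :: "'a \<Rightarrow> 'a"
    and L :: "real \<Rightarrow> real" and ft :: "'a \<Rightarrow> real \<Rightarrow> real" and gt :: "'a \<Rightarrow> real \<Rightarrow> 'a"
    and eps du dpu L0 psi_star :: real and x0 :: 'a
    and N K :: nat and x :: "nat \<Rightarrow> 'a" and Lk :: "nat \<Rightarrow> real" and it :: "nat \<Rightarrow> nat"
    and w :: "nat \<Rightarrow> nat \<Rightarrow> 'a"
  assumes norm: "is_norm nE"
    and X: "closed X" "convex X"
    and h: "convex_on X h"
    and orc: "inexact_oracle nE X f du L ft gt"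
    and Lgrowth: "\<forall>c1>0. \<forall>c2>0. \<exists>i::nat. 2 ^ i * c1 \<ge> L (c2 / (c1 * 2 ^ i))"
    and lower: "\<forall>y\<in>X. f y + h y \<ge> psi_star"
    and prox: "prox_setup nE X d d'"
    and params: "eps > 0" "du > 0" "dpu > 0" "L0 > 0" "x0 \<in> X0_of d X"
    and run: "agm_run nE X d d' h ft gt eps du dpu x0 L0 N x Lk it w"
    and N: "N \<ge> 1"
    and K: "K < N"
    and Kmin: "\<forall>k<N. nE (agm_M Lk K (it K) *\<^sub>R (x K - x (Suc K)))
                      \<le> nE (agm_M Lk k (it k) *\<^sub>R (x k - x (Suc k)))"
  shows "(nE (agm_M Lk K (it K) *\<^sub>R (x K - x (Suc K))))\<^sup>2
           \<le> inverse (\<Sum>k<N. 1 / (2 * agm_M Lk k (it k)))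
               * (f x0 + h x0 - psi_star + real N * (4 * du + dpu)) + eps / 2
      \<and> real (\<Sum>k<N. it k + 1) \<le> 2 * real N - 1 + log 2 (agm_M Lk (N - 1) (it (N - 1)) / L0)"
proof -
  define M where "M k = agm_M Lk k (it k)" for k
  define r where "r k = (nE (M k *\<^sub>R (x k - x (Suc k))))\<^sup>2" for k
  define S where "S = (\<Sum>k<N. 1 / (2 * M k))"
  have M_pos: "k < N \<Longrightarrow> M k > 0" for k using agm_run_M_pos[OF run params(4)] by (simp add: M_def)
  have "S > 0" unfolding S_def using N M_pos by (intro sum_pos) (auto simp: lessThan_empty_iff)
  have "(\<Sum>k<N. eps / (4 * M k)) = eps / 2 * S" by (simp add: S_def sum_distrib_left)
  moreover have "\<forall>k<N. r K \<le> r k"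
    using Kmin norm unfolding r_def M_def is_norm_def by (auto intro: power_mono)
  then have "r K * S \<le> (\<Sum>k<N. r k / (2 * M k))"
    using weighted_sum_ge_min[of N r K "\<lambda>k. 1 / (2 * M k)"] M_pos
    unfolding S_def by (simp add: less_imp_le)
  moreover have "f (x N) + h (x N) \<ge> psi_star"
    using lower agm_run_iterate_X0[OF run params(5), of N] unfolding X0_of_def by auto
  ultimately have "r K * S \<le> f x0 + h x0 - psi_star + real N * (4 * du + dpu) + eps / 2 * S"
    using agm_run_telescope[OF run norm orc prox params(1,4,5) order_refl]
    unfolding M_def r_def by linarith
  then have "r K \<le> inverse S * (f x0 + h x0 - psi_star + real N * (4 * du + dpu)) + eps / 2"
    using \<open>S > 0\<close> by (simp add: field_simps)
  then show ?thesis
    using agm_run_check_count[OF run params(4) N] unfolding r_def M_def S_def by simp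
qed

end
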